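(* Let $M>0$, let $f:[0,1]\to\mathbb{R}$ satisfy $|f(x)-f(y)|\le M|x-y|$ for all $x,y\in[0,1]$, and let $g(x)=f(x)\bmod 1\in[0,1)$. Let $n\ge2$ be an integer and $x_i=\frac{i-1}{n-1}$ for $i=1,\dots,n$. Let $\delta\in[0,1/2]$ and let $\hat g:[0,1]\to[0,1)$ satisfy $d_w(\hat g(x_i),g(x_i))\le\delta$ for all $i$. Define $\tilde f(x_1)=\hat g(x_1)$ and, for $i=2,\dots,n$, $$\tilde f(x_i)=\tilde f(x_{i-1})+\begin{cases}\hat g(x_i)-\hat g(x_{i-1}) & \text{if } |\hat g(x_i)-\hat g(x_{i-1})|<1/2,\\ 1+\hat g(x_i)-\hat g(x_{i-1}) & \text{if } \hat g(x_i)-\hat g(x_{i-1})<-1/2,\\ -1+\hat g(x_i)-\hat g(x_{i-1}) & \text{if } \hat g(x_i)-\hat g(x_{i-1})>1/2.\end{cases}$$ If $2\delta+\frac{M}{n-1}<\frac12$, then there exists $q^\star\in\mathbb{Z}$ such that $|\tilde f(x_i)+q^\star-f(x_i)|\le\delta$ for all $i=1,\dots,n$.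
   Context: For $a\in\mathbb{R}$, $a\bmod 1\in[0,1)$ denotes $a-\lfloor a\rfloor$. The wrap-around distance on $[0,1)$ is $d_w(a,b)=\min(|a-b|,1-|a-b|)$. *)

theory Defs
  imports "HOL-Analysis.Analysis"
begin

definition mod1 :: "real \<Rightarrow> real" where
  "mod1 a = a - of_int \<lfloor>a\<rfloor>"

definition dw :: "real \<Rightarrow> real \<Rightarrow> real" where
  "dw a b = min \<bar>a - b\<bar> (1 - \<bar>a - b\<bar>)"

definition gridpt :: "nat \<Rightarrow> nat \<Rightarrow> real" where
  "gridpt n i = (real i - 1) / (real n - 1)"

definition unwrap_incr :: "real \<Rightarrow> real \<Rightarrow> real" where
  "unwrap_incr a b =
     (if \<bar>b - a\<bar> < 1/2 then b - a
      else if b - a < - (1/2) then 1 + b - a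
      else if b - a > 1/2 then -1 + b - a
      else 0)"

text \<open>ftilde gh n i = \<tilde>f(x_i), for 1-based i (value at i = 0 is irrelevant, set equal to i = 1)\<close>
fun ftilde :: "(real \<Rightarrow> real) \<Rightarrow> nat \<Rightarrow> nat \<Rightarrow> real" where
  "ftilde gh n 0 = gh (gridpt n 1)"
| "ftilde gh n (Suc 0) = gh (gridpt n 1)"
| "ftilde gh n (Suc (Suc k)) =
     ftilde gh n (Suc k) + unwrap_incr (gh (gridpt n (Suc k))) (gh (gridpt n (Suc (Suc k))))"

end

theory Submission
  imports Defs
begin

text \<open>Choose integer lifts \<open>h i = gh x\<^sub>i + k\<^sub>i\<close> of the noisy samples that are within \<open>\<delta>\<close> of
  \<open>f x\<^sub>i\<close>. Consecutive lifts then differ by at most \<open>2\<delta> + M/(n-1) < 1/2\<close>, and an increment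
  below \<open>1/2\<close> is exactly what the unwrapping rule recovers from the wrapped values. Hence
  \<open>\<tilde>f\<close> telescopes to \<open>h i - k\<^sub>1\<close>, and \<open>q\<^sup>\<star> = k\<^sub>1\<close> works.\<close>

lemma dw_mod1_le_imp_int_shift:
  assumes "dw a (mod1 y) \<le> \<delta>" "0 \<le> a" "a < 1"
  shows "\<exists>k::int. \<bar>a + of_int k - y\<bar> \<le> \<delta>"
proof -
  have y: "y = mod1 y + of_int \<lfloor>y\<rfloor>" and "0 \<le> mod1 y" "mod1 y < 1"
    by (simp_all add: mod1_def) linarith+
  consider "\<bar>a - mod1 y\<bar> \<le> \<delta>" | "a - mod1 y \<ge> 0" "1 - (a - mod1 y) \<le> \<delta>"
    | "a - mod1 y < 0" "1 + (a - mod1 y) \<le> \<delta>"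
    using assms(1) unfolding dw_def by linarith
  then show ?thesis
  proof cases
    case 1
    then show ?thesis using y by (intro exI[of _ "\<lfloor>y\<rfloor>"]) linarith
  next
    case 2
    then show ?thesis using y \<open>0 \<le> mod1 y\<close> assms(3)
      by (intro exI[of _ "\<lfloor>y\<rfloor> - 1"]) (simp add: abs_le_iff)
  next
    case 3
    then show ?thesis using y \<open>mod1 y < 1\<close> assms(2)
      by (intro exI[of _ "\<lfloor>y\<rfloor> + 1"]) (simp add: abs_le_iff)
  qed
qed

lemma unwrap_incr_eq_lift_diff:
  assumes "0 \<le> a" "a < 1" "0 \<le> b" "b < 1"
    and small: "\<bar>(b + of_int l) - (a + of_int k)\<bar> < 1/2"
  shows "unwrap_incr a b = (b + of_int l) - (a + of_int k)"
proof -
  have "real_of_int \<bar>l - k\<bar> < 3/2"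
    using assms by linarith
  then have "\<bar>l - k\<bar> < 2"
    by linarith
  then have "l - k \<in> {-1, 0, 1}"
    by auto
  then show ?thesis
    using assms unfolding unwrap_incr_def by auto
qed

lemma ftilde_eq_lift:
  assumes "1 \<le> i"
    and steps: "\<And>j. 1 \<le> j \<Longrightarrow> j < i \<Longrightarrow>
      unwrap_incr (gh (gridpt n j)) (gh (gridpt n (Suc j))) = h (Suc j) - h j"
  shows "ftilde gh n i = gh (gridpt n 1) + h i - h 1"
  using assms
proof (induction i rule: nat_induct_at_least)
  case base
  then show ?case by simp
next
  case (Suc j)
  then obtain j' where "j = Suc j'"
    by (cases j) auto
  then show ?case
    using Suc by simp
qed

lemma gridpt_in_unit_interval:
  assumes "n \<ge> 2" "1 \<le> i" "i \<le> n"
  shows "gridpt n i \<in> {0..1}"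
  using assms by (auto simp: gridpt_def divide_simps)

lemma gridpt_Suc_diff: "gridpt n (Suc i) - gridpt n i = 1 / (real n - 1)"
  by (simp add: gridpt_def diff_divide_distrib[symmetric])

lemma lipschitz_grid_step:
  assumes f_lip: "\<forall>x\<in>{0..1}. \<forall>y\<in>{0..1}. \<bar>f x - f y\<bar> \<le> M * \<bar>x - y\<bar>"
    and "n \<ge> 2" "1 \<le> j" "j < n"
  shows "\<bar>f (gridpt n (Suc j)) - f (gridpt n j)\<bar> \<le> M / (real n - 1)"
proof -
  have "gridpt n (Suc j) \<in> {0..1}" "gridpt n j \<in> {0..1}"
    using gridpt_in_unit_interval[of n "Suc j"] gridpt_in_unit_interval[of n j] assms(2-4)
    by simp_all
  then have "\<bar>f (gridpt n (Suc j)) - f (gridpt n j)\<bar> \<le> M * \<bar>1 / (real n - 1)\<bar>"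
    using f_lip gridpt_Suc_diff[of n j] by metis
  then show ?thesis
    using \<open>n \<ge> 2\<close> by simp
qed

theorem mainTheorem2:
  fixes f gh :: "real \<Rightarrow> real" and M \<delta> :: real and n :: nat
  assumes M_pos: "M > 0"
    and f_lip: "\<forall>x\<in>{0..1}. \<forall>y\<in>{0..1}. \<bar>f x - f y\<bar> \<le> M * \<bar>x - y\<bar>"
    and n_ge: "n \<ge> 2"
    and \<delta>_range: "0 \<le> \<delta>" "\<delta> \<le> 1/2"
    and gh_range: "\<forall>x\<in>{0..1}. 0 \<le> gh x \<and> gh x < 1"
    and gh_close: "\<forall>i\<in>{1..n}. dw (gh (gridpt n i)) (mod1 (f (gridpt n i))) \<le> \<delta>"
    and small: "2 * \<delta> + M / (real n - 1) < 1/2"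
  shows "\<exists>q::int. \<forall>i\<in>{1..n}. \<bar>ftilde gh n i + of_int q - f (gridpt n i)\<bar> \<le> \<delta>"
proof -
  have gh01: "0 \<le> gh (gridpt n i)" "gh (gridpt n i) < 1" if "i \<in> {1..n}" for i
    using gh_range gridpt_in_unit_interval[OF n_ge] that by auto
  have "\<forall>i\<in>{1..n}. \<exists>k::int. \<bar>gh (gridpt n i) + of_int k - f (gridpt n i)\<bar> \<le> \<delta>"
    using dw_mod1_le_imp_int_shift gh_close gh01 by blast
  then obtain k :: "nat \<Rightarrow> int"
    where k: "\<And>i. i \<in> {1..n} \<Longrightarrow> \<bar>gh (gridpt n i) + of_int (k i) - f (gridpt n i)\<bar> \<le> \<delta>"
    by metis
  define h where "h i = gh (gridpt n i) + of_int (k i)" for i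
  have "unwrap_incr (gh (gridpt n j)) (gh (gridpt n (Suc j))) = h (Suc j) - h j"
    if "1 \<le> j" "j < n" for j
  proof -
    have j: "j \<in> {1..n}" "Suc j \<in> {1..n}"
      using that by auto
    have "\<bar>h (Suc j) - h j\<bar> < 1/2"
      using k[OF j(1)] k[OF j(2)] lipschitz_grid_step[OF f_lip n_ge that] small
      unfolding h_def by linarith
    then show ?thesis
      unfolding h_def using gh01[OF j(1)] gh01[OF j(2)]
      by (intro unwrap_incr_eq_lift_diff)
  qed
  then have "ftilde gh n i = h i - of_int (k 1)" if "i \<in> {1..n}" for i
    using ftilde_eq_lift[of i gh n h] that unfolding h_def by auto
  then show ?thesis
    using k unfolding h_def by (intro exI[of _ "k 1"]) auto
qed

end
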